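(* There exist an environment $E$ and a total preorder $\succeq$ on $\Pi^E$ such that $\succeq\in\mathrm{Ord}_{\mathrm{LAR}}(E)$ but $\succeq\notin\mathrm{Ord}_{\mathrm{RRL}}(E)$.
   Context: An environment is a tuple $E=(\mathcal S,\mathcal A,\mathcal T,\mathcal I)$ where $\mathcal S,\mathcal A$ are finite nonempty sets, $\mathcal T:\mathcal S\times\mathcal A\to\Delta(\mathcal S)$ and $\mathcal I\in\Delta(\mathcal S)$. A policy is a map $\pi:\mathcal S\to\Delta(\mathcal A)$ (stationary, possibly stochastic); $\Pi^E$ denotes the set of all policies. A trajectory $\xi=(s_0,a_0,s_1,a_1,\dots)$ is generated under $\pi$ by $s_0\sim\mathcal I$, $a_t\sim\pi(s_t)$, $s_{t+1}\sim\mathcal T(s_t,a_t)$; $\mathbb E^\pi_\xi$ denotes expectation under this distribution. An objective-specification formalism $X$ assigns to each environment $E$ a set of objective specifications, each inducing a total preorder $\succeq$ on $\Pi^E$; $\mathrm{Ord}_X(E)$ is the set of total preorders so induced. A specification defining a scalar $J:\Pi^E\to\mathbb R$ induces $\pi_1\succeq\pi_2\iff J(\pi_1)\ge J(\pi_2)$. LAR: specification $(\mathcal R)$, $\mathcal R:\mathcal S\times\mathcal A\times\mathcal S\to\mathbb R$, $J(\pi)=\lim_{N\to\infty}\frac1N\mathbb E^\pi_\xi[\sum_{t=0}^{N-1}\mathcal R(s_t,a_t,s_{t+1})]$. RRL: specification $(\mathcal R,\alpha,F,\gamma)$ with $\mathcal R:\mathcal S\times\mathcal A\times\mathcal S\to\mathbb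 R$, $\alpha\in\mathbb R$, $F:\Delta(\mathcal A)\to\mathbb R$, $\gamma\in[0,1)$; $J(\pi)=\mathbb E^\pi_\xi[\sum_{t=0}^\infty\gamma^t(\mathcal R(s_t,a_t,s_{t+1})-\alpha F(\pi(s_t)))]$. *)

theory Defs
  imports "HOL-Probability.Probability_Mass_Function"
begin

record env =
  St :: "nat set"
  Ac :: "nat set"
  Tr :: "nat \<Rightarrow> nat \<Rightarrow> nat pmf"
  Init :: "nat pmf"

definition is_env :: "env \<Rightarrow> bool" where
  "is_env E \<longleftrightarrow> finite (St E) \<and> St E \<noteq> {} \<and> finite (Ac E) \<and> Ac E \<noteq> {}
     \<and> (\<forall>s\<in>St E. \<forall>a\<in>Ac E. set_pmf (Tr E s a) \<subseteq> St E)
     \<and> set_pmf (Init E) \<subseteq> St E"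

definition policies :: "env \<Rightarrow> (nat \<Rightarrow> nat pmf) set" where
  "policies E = {\<pi>. (\<forall>s\<in>St E. set_pmf (\<pi> s) \<subseteq> Ac E)
                    \<and> (\<forall>s. s \<notin> St E \<longrightarrow> \<pi> s = return_pmf undefined)}"

primrec state_dist :: "env \<Rightarrow> (nat \<Rightarrow> nat pmf) \<Rightarrow> nat \<Rightarrow> nat pmf" where
  "state_dist E \<pi> 0 = Init E"
| "state_dist E \<pi> (Suc t) =
     bind_pmf (state_dist E \<pi> t) (\<lambda>s. bind_pmf (\<pi> s) (\<lambda>a. Tr E s a))"

definition step_dist :: "env \<Rightarrow> (nat \<Rightarrow> nat pmf) \<Rightarrow> nat \<Rightarrow> (nat \<times> nat \<times> nat) pmf" where
  "step_dist E \<pi> t = bind_pmf (state_dist E \<pi> t)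
     (\<lambda>s. bind_pmf (\<pi> s) (\<lambda>a. map_pmf (\<lambda>s'. (s, a, s')) (Tr E s a)))"

text \<open>LAR objective (expectation of the finite sum written as the sum of expectations).\<close>
definition LAR_J :: "env \<Rightarrow> (nat \<Rightarrow> nat \<Rightarrow> nat \<Rightarrow> real) \<Rightarrow> (nat \<Rightarrow> nat pmf) \<Rightarrow> real" where
  "LAR_J E R \<pi> = lim (\<lambda>N. (1 / real N) *
      (\<Sum>t<N. measure_pmf.expectation (step_dist E \<pi> t) (\<lambda>(s, a, s'). R s a s')))"

text \<open>RRL objective (expectation of the discounted series written as the series of expectations).\<close>
definition RRL_J :: "env \<Rightarrow> (nat \<Rightarrow> nat \<Rightarrow> nat \<Rightarrow> real) \<Rightarrow> real \<Rightarrow> (nat pmf \<Rightarrow> real) \<Rightarrow> real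
                      \<Rightarrow> (nat \<Rightarrow> nat pmf) \<Rightarrow> real" where
  "RRL_J E R \<alpha> F \<gamma> \<pi> = (\<Sum>t. \<gamma> ^ t * measure_pmf.expectation (step_dist E \<pi> t)
      (\<lambda>(s, a, s'). R s a s' - \<alpha> * F (\<pi> s)))"

definition induced_order :: "'p set \<Rightarrow> ('p \<Rightarrow> real) \<Rightarrow> ('p \<times> 'p) set" where
  "induced_order P J = {(p1, p2). p1 \<in> P \<and> p2 \<in> P \<and> J p1 \<ge> J p2}"

definition Ord_LAR :: "env \<Rightarrow> ((nat \<Rightarrow> nat pmf) \<times> (nat \<Rightarrow> nat pmf)) set set" where
  "Ord_LAR E = {induced_order (policies E) (LAR_J E R) | R. True}"

definition Ord_RRL :: "env \<Rightarrow> ((nat \<Rightarrow> nat pmf) \<times> (nat \<Rightarrow> nat pmf)) set set" where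
  "Ord_RRL E = {induced_order (policies E) (RRL_J E R \<alpha> F \<gamma>) | R \<alpha> F \<gamma>. 0 \<le> \<gamma> \<and> \<gamma> < 1}"

end

theory Submission
  imports Defs
begin

text \<open>Take states 0, 1, 2 with 2 absorbing, where action 0 in state 0 detours through state 1
  and every other move leads to 2. The LAR reward paying 1 for action 1 in state 2 sees only the
  action y taken in state 2, not the choice x in state 0 that decides whether state 2 is reached
  at time 1 or 2. Under any discounted objective, switching y from 0 to 1 shifts the value by
  \<open>\<gamma>\<^sup>k D / (1 - \<gamma>)\<close>, where k is that arrival time and D does not depend on x.
  Indifference in x forces \<open>\<gamma> D = \<gamma>\<^sup>2 D\<close>, strict preference for y = 1 forces
  \<open>\<gamma> D > 0\<close>, hence \<open>\<gamma> = 1\<close>.\<close>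

lemma preorder_on_induced_order: "preorder_on P (induced_order P J)"
  by (auto simp: preorder_on_def refl_on_def trans_def induced_order_def)

lemma total_on_induced_order: "total_on P (induced_order P J)"
  by (auto simp: total_on_def induced_order_def)

lemma induced_order_eqD:
  assumes "induced_order P J1 = induced_order P J2" "p \<in> P" "q \<in> P"
  shows "J1 p \<ge> J1 q \<longleftrightarrow> J2 p \<ge> J2 q"
  using assms by (auto simp: induced_order_def set_eq_iff)

lemma cesaro_mean_eventually_const:
  fixes e :: "nat \<Rightarrow> real"
  assumes "\<And>t. t \<ge> k \<Longrightarrow> e t = c"
  shows "(\<lambda>N. (1 / real N) * (\<Sum>t<N. e t)) \<longlonglongrightarrow> c"
proof -
  define S where "S = (\<Sum>t<k. e t) - real k * c"
  have "(\<Sum>t<N. e t) = S + real N * c" if "k \<le> N" for N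
  proof -
    have "(\<Sum>t<N. e t) = (\<Sum>t<k. e t) + (\<Sum>t\<in>{k..<N}. e t)"
      using that by (metis atLeast0LessThan le0 sum.atLeastLessThan_concat)
    also have "(\<Sum>t\<in>{k..<N}. e t) = real (N - k) * c"
      using assms by simp
    finally show ?thesis
      using that by (simp add: S_def algebra_simps)
  qed
  then have "\<forall>\<^sub>F N in sequentially. S / real N + c = (1 / real N) * (\<Sum>t<N. e t)"
    by (auto simp: eventually_sequentially field_simps intro!: exI[of _ "Suc k"])
  moreover have "(\<lambda>N. S / real N + c) \<longlonglongrightarrow> 0 + c"
    by (intro tendsto_add tendsto_const tendsto_divide_0[OF tendsto_const]
        filterlim_at_top_imp_at_infinity[OF filterlim_real_sequentially])
  ultimately show ?thesis
    using Lim_transform_eventually by fastforce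
qed

lemma discounted_sums_eventually_const:
  fixes e :: "nat \<Rightarrow> real"
  assumes "\<bar>\<gamma>\<bar> < 1" "\<And>t. t \<ge> k \<Longrightarrow> e t = c"
  shows "(\<lambda>t. \<gamma> ^ t * e t) sums ((\<Sum>t<k. \<gamma> ^ t * e t) + \<gamma> ^ k * c / (1 - \<gamma>))"
proof -
  have "(\<lambda>t. \<gamma> ^ k * c * \<gamma> ^ t) sums (\<gamma> ^ k * c * (1 / (1 - \<gamma>)))"
    using assms(1) by (intro sums_mult geometric_sums) simp
  moreover have "\<gamma> ^ (t + k) * e (t + k) = \<gamma> ^ k * c * \<gamma> ^ t" for t
    using assms(2) by (simp add: power_add)
  ultimately show ?thesis
    by (subst add.commute) (simp add: sums_iff_shift[symmetric])
qed

definition detour_env :: env where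
  "detour_env = \<lparr>St = {0, 1, 2}, Ac = {0, 1},
     Tr = (\<lambda>s a. return_pmf (if s = 0 \<and> a = 0 then 1 else 2)),
     Init = return_pmf 0\<rparr>"

definition detour_action :: "nat \<Rightarrow> nat \<Rightarrow> nat \<Rightarrow> nat" where
  "detour_action x y s = (if s = 0 then x else if s = 2 then y else 0)"

definition detour_policy :: "nat \<Rightarrow> nat \<Rightarrow> nat \<Rightarrow> nat pmf" where
  "detour_policy x y s =
     (if s \<in> {0, 1, 2} then return_pmf (detour_action x y s) else return_pmf undefined)"

definition detour_arrival :: "nat \<Rightarrow> nat" where
  "detour_arrival x = (if x = 0 then 2 else 1)"

definition detour_state :: "nat \<Rightarrow> nat \<Rightarrow> nat" where
  "detour_state x t = (if t = 0 then 0 else if t < detour_arrival x then 1 else 2)"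

lemma detour_state_eq_2_iff: "detour_state x t = 2 \<longleftrightarrow> detour_arrival x \<le> t"
  by (auto simp: detour_state_def detour_arrival_def)

lemma detour_state_after_arrival: "detour_arrival x \<le> t \<Longrightarrow> detour_state x t = 2"
  by (simp add: detour_state_eq_2_iff)

lemma is_env_detour_env: "is_env detour_env"
  by (auto simp: is_env_def detour_env_def)

lemma detour_policy_in_policies:
  "x \<in> {0, 1} \<Longrightarrow> y \<in> {0, 1} \<Longrightarrow> detour_policy x y \<in> policies detour_env"
  by (auto simp: policies_def detour_policy_def detour_action_def detour_env_def)

lemma state_dist_detour:
  "state_dist detour_env (detour_policy x y) t = return_pmf (detour_state x t)"
  by (induction t)
    (auto simp: detour_env_def detour_state_def detour_policy_def detour_action_def detour_arrival_def
      bind_return_pmf)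

lemma step_dist_detour:
  "step_dist detour_env (detour_policy x y) t =
     return_pmf (detour_state x t, detour_action x y (detour_state x t), detour_state x (Suc t))"
  unfolding step_dist_def state_dist_detour
  by (auto simp: detour_env_def detour_state_def detour_policy_def detour_action_def
      detour_arrival_def map_pmf_def bind_return_pmf)

definition lar_reward :: "nat \<Rightarrow> nat \<Rightarrow> nat \<Rightarrow> real" where
  "lar_reward s a s' = of_bool (s = 2 \<and> a = 1)"

lemma LAR_J_detour: "LAR_J detour_env lar_reward (detour_policy x y) = of_bool (y = 1)"
  unfolding LAR_J_def step_dist_detour
  by (intro limI cesaro_mean_eventually_const[where k = "detour_arrival x"])
    (simp add: lar_reward_def detour_state_after_arrival detour_action_def)

lemma RRL_J_detour_diff:
  fixes R :: "nat \<Rightarrow> nat \<Rightarrow> nat \<Rightarrow> real" and \<alpha> \<gamma> :: real and F :: "nat pmf \<Rightarrow> real"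
  assumes "0 \<le> \<gamma>" "\<gamma> < 1"
  defines "W y \<equiv> R 2 y 2 - \<alpha> * F (return_pmf y)"
  shows "RRL_J detour_env R \<alpha> F \<gamma> (detour_policy x 1) - RRL_J detour_env R \<alpha> F \<gamma> (detour_policy x 0)
           = \<gamma> ^ detour_arrival x * (W 1 - W 0) / (1 - \<gamma>)"
proof -
  define e where "e y t =
    R (detour_state x t) (detour_action x y (detour_state x t)) (detour_state x (Suc t))
      - \<alpha> * F (detour_policy x y (detour_state x t))" for y t
  have J: "RRL_J detour_env R \<alpha> F \<gamma> (detour_policy x y)
             = (\<Sum>t<detour_arrival x. \<gamma> ^ t * e y t) + \<gamma> ^ detour_arrival x * W y / (1 - \<gamma>)" for y
  proof -
    have "(\<lambda>t. \<gamma> ^ t * e y t) sums ((\<Sum>t<detour_arrival x. \<gamma> ^ t * e y t) + \<gamma> ^ detour_arrival x * W y / (1 - \<gamma>))"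
      using assms(1,2)
      by (intro discounted_sums_eventually_const)
        (simp_all add: e_def W_def detour_state_after_arrival detour_policy_def detour_action_def)
    then show ?thesis
      by (simp add: RRL_J_def step_dist_detour e_def sums_iff)
  qed
  have "e 1 t = e 0 t" if "t < detour_arrival x" for t
    using that by (auto simp: e_def detour_state_eq_2_iff detour_policy_def detour_action_def)
  then show ?thesis
    by (simp add: J diff_divide_distrib algebra_simps)
qed

lemma LAR_order_detour_not_in_Ord_RRL:
  "induced_order (policies detour_env) (LAR_J detour_env lar_reward) \<notin> Ord_RRL detour_env"
proof
  assume "induced_order (policies detour_env) (LAR_J detour_env lar_reward) \<in> Ord_RRL detour_env"
  then obtain R \<alpha> F and \<gamma> :: real where \<gamma>: "0 \<le> \<gamma>" "\<gamma> < 1" and same_order: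
      "induced_order (policies detour_env) (LAR_J detour_env lar_reward)
         = induced_order (policies detour_env) (RRL_J detour_env R \<alpha> F \<gamma>)"
    by (auto simp: Ord_RRL_def)
  define J where "J x y = RRL_J detour_env R \<alpha> F \<gamma> (detour_policy x y)" for x y
  define D where "D = (R 2 1 2 - \<alpha> * F (return_pmf 1)) - (R 2 0 2 - \<alpha> * F (return_pmf 0))"
  have agree: "(of_bool (y = 1) :: real) \<ge> of_bool (y' = 1) \<longleftrightarrow> J x y \<ge> J x' y'"
    if "x \<in> {0, 1}" "y \<in> {0, 1}" "x' \<in> {0, 1}" "y' \<in> {0, 1}" for x y x' y'
    using induced_order_eqD[OF same_order detour_policy_in_policies[of x y] detour_policy_in_policies[of x' y']]
      that
    by (simp add: J_def LAR_J_detour)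
  have diff: "J x 1 - J x 0 = \<gamma> ^ detour_arrival x * D / (1 - \<gamma>)" for x
    using RRL_J_detour_diff[OF \<gamma>] by (simp add: J_def D_def)
  have "J 1 1 = J 0 1" "J 1 0 = J 0 0" "J 1 0 < J 1 1"
    using agree[of 1 1 0 1] agree[of 0 1 1 1] agree[of 1 0 0 0] agree[of 0 0 1 0] agree[of 1 0 1 1]
    by auto
  moreover have "J 1 1 - J 1 0 = \<gamma> * D / (1 - \<gamma>)" "J 0 1 - J 0 0 = \<gamma>\<^sup>2 * D / (1 - \<gamma>)"
    using diff[of 1] diff[of 0] by (simp_all add: detour_arrival_def)
  ultimately have "\<gamma> * D / (1 - \<gamma>) = \<gamma>\<^sup>2 * D / (1 - \<gamma>)" "\<gamma> * D / (1 - \<gamma>) > 0"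
    by linarith+
  then have "\<gamma> * D = \<gamma>\<^sup>2 * D" "\<gamma> * D > 0"
    using \<gamma> by (simp_all add: zero_less_divide_iff)
  then have "\<gamma> = 1"
    by (auto simp: power2_eq_square)
  with \<gamma> show False
    by simp
qed

theorem mainTheorem19:
  shows "\<exists>E r. is_env E \<and> preorder_on (policies E) r \<and> total_on (policies E) r
            \<and> r \<in> Ord_LAR E \<and> r \<notin> Ord_RRL E"
proof (intro exI conjI)
  show "is_env detour_env"
    by (rule is_env_detour_env)
  show "induced_order (policies detour_env) (LAR_J detour_env lar_reward) \<in> Ord_LAR detour_env"
    by (auto simp: Ord_LAR_def)
qed (rule preorder_on_induced_order total_on_induced_order LAR_order_detour_not_in_Ord_RRL)+

end
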